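(* Every Move-To-Front-Every-Other-Access algorithm (for any choice of initial bits) has competitive ratio at least $2.5$ (full cost model): for every such algorithm $A$, every $c<2.5$ and every constant $b$, there exist a list and a request sequence $\sigma$ with $A(\sigma)>c\cdot\mathrm{OPT}(\sigma)+b$.
   Context: Static list update: a list of distinct items in some initial order; serving a request to the item at position $i$ (from the front) costs $i$ (full cost model); the accessed item may be moved closer to the front for free (free exchange); two adjacent items may be swapped at cost $1$ (paid exchange). $A(\sigma)$ is the total cost of algorithm $A$ and $\mathrm{OPT}(\sigma)$ the minimum cost of any offline algorithm from the same initial list. A Move-To-Front-Every-Other-Access (MTF2) algorithm maintains one bit per item, with arbitrary initial values; on each request to an item $z$ it flips the bit of $z$, and if the bit becomes $0$ it moves $z$ to the front (free exchange), otherwise it leaves the list unchanged; it makes no paid exchanges. (MTFO is the case with all initial bits $1$, MTFE with all initial bits $0$.) *)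

theory Defs
  imports Complex_Main
begin

(* 0-based position of x in xs (length xs if absent); access cost is pos + 1 *)
fun pos :: "'a \<Rightarrow> 'a list \<Rightarrow> nat" where
  "pos x [] = 0"
| "pos x (y # ys) = (if x = y then 0 else Suc (pos x ys))"

definition swap_adj :: "nat \<Rightarrow> 'a list \<Rightarrow> 'a list" where
  "swap_adj i xs = (if Suc i < length xs then xs[i := xs ! Suc i, Suc i := xs ! i] else xs)"

definition move_to :: "nat \<Rightarrow> 'a \<Rightarrow> 'a list \<Rightarrow> 'a list" where
  "move_to j x xs = take j (remove1 x xs) @ x # drop j (remove1 x xs)"

(* cost of an offline algorithm: for each request, a list of paid adjacent swaps
   (each cost 1) done before serving, the access (cost position, 1-based), then
   the accessed item is moved forward (free) to position min j (its position) *)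
fun off_cost :: "'a list \<Rightarrow> 'a list \<Rightarrow> (nat list \<times> nat) list \<Rightarrow> nat" where
  "off_cost s [] _ = 0"
| "off_cost s (x # \<sigma>) [] = 0"
| "off_cost s (x # \<sigma>) ((sw, j) # as) =
     (let s' = fold swap_adj sw s; i = pos x s'
      in length sw + (i + 1) + off_cost (move_to (min j i) x s') \<sigma> as)"

definition OPT :: "'a list \<Rightarrow> 'a list \<Rightarrow> nat" where
  "OPT s \<sigma> = (LEAST c. \<exists>as. length as = length \<sigma> \<and> off_cost s \<sigma> as = c)"

(* MTF2 with current bit assignment B (True = 1, False = 0): on request z flip the
   bit of z; if it becomes 0, move z to the front; no paid exchanges *)
fun mtf2_cost :: "('a \<Rightarrow> bool) \<Rightarrow> 'a list \<Rightarrow> 'a list \<Rightarrow> nat" where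
  "mtf2_cost B s [] = 0"
| "mtf2_cost B s (z # \<sigma>) =
     (let B' = B(z := \<not> B z)
      in pos z s + 1 + mtf2_cost B' (if B' z then s else z # remove1 z s) \<sigma>)"

end

theory Submission
  imports Defs
begin

text \<open>
  The adversary first requests once each item whose bit is 0, which sets all bits to 1 without
  moving anything. It then repeats the phase \<open>sweep xs @ sweep (rev xs)\<close>, where a sweep is a
  scan of the list followed by every item requested three times in a row. During the scan MTF2
  moves every item to the front and so reverses its list; the first request of each triple then
  finds its item at the back, and MTF2 moves it only on the second request. Hence MTF2 pays
  \<open>(5n\<^sup>2 + 3n)/2\<close> per sweep and is back in its initial configuration after a phase. An offline
  algorithm that keeps its list during the scan and moves to the front during the triples pays
  only \<open>n\<^sup>2 + 3n\<close> per sweep. The ratio tends to \<open>5/2\<close>, and enough phases swamp the additive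
  constant.
\<close>

definition triple :: "'a list \<Rightarrow> 'a list" where
  "triple ys = concat (map (\<lambda>y. [y, y, y]) ys)"

lemma triple_simps [simp]:
  "triple [] = []"
  "triple (y # ys) = y # y # y # triple ys"
  by (simp_all add: triple_def)

lemma length_triple [simp]: "length (triple ys) = 3 * length ys"
  by (induction ys) auto

lemma set_triple [simp]: "set (triple ys) = set ys"
  by (induction ys) auto

definition sweep :: "'a list \<Rightarrow> 'a list" where
  "sweep xs = xs @ triple xs"

definition phase :: "'a list \<Rightarrow> 'a list" where
  "phase xs = sweep xs @ sweep (rev xs)"

definition adversary :: "('a \<Rightarrow> bool) \<Rightarrow> 'a list \<Rightarrow> nat \<Rightarrow> 'a list" where
  "adversary B xs K = filter (\<lambda>x. \<not> B x) xs @ concat (replicate K (phase xs))"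

lemma set_adversary: "set (adversary B xs K) \<subseteq> set xs"
  by (auto simp: adversary_def phase_def sweep_def)

lemma pos_append_notin: "x \<notin> set as \<Longrightarrow> pos x (as @ bs) = length as + pos x bs"
  by (induction as) auto

lemma pos_less_length: "x \<in> set xs \<Longrightarrow> pos x xs < length xs"
  by (induction xs) auto

fun mtf2_state :: "('a \<Rightarrow> bool) \<Rightarrow> 'a list \<Rightarrow> 'a list \<Rightarrow> ('a \<Rightarrow> bool) \<times> 'a list" where
  "mtf2_state B s [] = (B, s)"
| "mtf2_state B s (z # \<sigma>) =
     (let B' = B(z := \<not> B z) in mtf2_state B' (if B' z then s else z # remove1 z s) \<sigma>)"

lemma mtf2_cost_append:
  "mtf2_cost B s (p @ q) = mtf2_cost B s p + (case mtf2_state B s p of (B', s') \<Rightarrow> mtf2_cost B' s' q)"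
  by (induction p arbitrary: B s) (auto simp: Let_def)

lemma mtf2_state_append:
  "mtf2_state B s (p @ q) = (case mtf2_state B s p of (B', s') \<Rightarrow> mtf2_state B' s' q)"
  by (induction p arbitrary: B s) (auto simp: Let_def)

lemma mtf2_cost_replicate:
  assumes "mtf2_state B s p = (B, s)"
  shows "mtf2_cost B s (concat (replicate K p)) = K * mtf2_cost B s p"
  by (induction K) (simp_all add: mtf2_cost_append assms)

lemma mtf2_request_clear_bits:
  assumes "distinct zs" "\<forall>z\<in>set zs. \<not> B z"
  shows "mtf2_state B s zs = (\<lambda>x. B x \<or> x \<in> set zs, s)"
  using assms
proof (induction zs arbitrary: B)
  case Nil
  then show ?case by simp
next
  case (Cons z zs)
  have "mtf2_state (B(z := True)) s zs = (\<lambda>x. (B(z := True)) x \<or> x \<in> set zs, s)"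
    using Cons.prems by (intro Cons.IH) auto
  with Cons.prems show ?case by (auto simp: Let_def)
qed

lemma mtf2_scan_suffix:
  assumes "distinct (ps @ ys)" "\<forall>y\<in>set ys. B y"
  shows "2 * mtf2_cost B (ps @ ys) ys = length ys * (2 * length ps + length ys + 1)
         \<and> mtf2_state B (ps @ ys) ys = (\<lambda>x. B x \<and> x \<notin> set ys, rev ys @ ps)"
  using assms
proof (induction ys arbitrary: ps B)
  case Nil
  then show ?case by simp
next
  case (Cons y ys)
  have IH: "2 * mtf2_cost (B(y := False)) ((y # ps) @ ys) ys
              = length ys * (2 * length (y # ps) + length ys + 1)
            \<and> mtf2_state (B(y := False)) ((y # ps) @ ys) ys
              = (\<lambda>x. (B(y := False)) x \<and> x \<notin> set ys, rev ys @ y # ps)"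
    using Cons.prems by (intro Cons.IH) auto
  from Cons.prems have "pos y (ps @ y # ys) = length ps" "remove1 y (ps @ y # ys) = ps @ ys"
    by (simp_all add: pos_append_notin remove1_append)
  with Cons.prems IH show ?case
    by (auto simp: Let_def algebra_simps)
qed

lemma mtf2_triples_rev_suffix:
  assumes "distinct (ps @ ys)" "\<forall>y\<in>set ys. \<not> B y"
  shows "mtf2_cost B (ps @ rev ys) (triple ys) = length ys * (2 * (length ps + length ys) + 1)
         \<and> mtf2_state B (ps @ rev ys) (triple ys) = (\<lambda>x. B x \<or> x \<in> set ys, rev ys @ ps)"
  using assms
proof (induction ys arbitrary: ps B)
  case Nil
  then show ?case by simp
next
  case (Cons y ys)
  have IH: "mtf2_cost (B(y := True)) ((y # ps) @ rev ys) (triple ys)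
              = length ys * (2 * (length (y # ps) + length ys) + 1)
            \<and> mtf2_state (B(y := True)) ((y # ps) @ rev ys) (triple ys)
              = (\<lambda>x. (B(y := True)) x \<or> x \<in> set ys, rev ys @ y # ps)"
    using Cons.prems by (intro Cons.IH) auto
  from Cons.prems have "pos y ((ps @ rev ys) @ [y]) = length ps + length ys"
      "remove1 y ((ps @ rev ys) @ [y]) = ps @ rev ys"
    by (simp_all add: pos_append_notin remove1_append)
  with Cons.prems IH show ?case
    by (auto simp: Let_def algebra_simps)
qed

lemma mtf2_sweep:
  assumes "distinct xs" "\<forall>x\<in>set xs. B x"
  shows "2 * mtf2_cost B xs (sweep xs) = 5 * length xs ^ 2 + 3 * length xs
         \<and> mtf2_state B xs (sweep xs) = (B, rev xs)"
proof -
  let ?n = "length xs" and ?B' = "\<lambda>x. B x \<and> x \<notin> set xs"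
  have scan: "2 * mtf2_cost B xs xs = ?n * (?n + 1) \<and> mtf2_state B xs xs = (?B', rev xs)"
    using mtf2_scan_suffix[of "[]" xs B] assms by simp
  have triples: "mtf2_cost ?B' (rev xs) (triple xs) = ?n * (2 * ?n + 1)
                 \<and> mtf2_state ?B' (rev xs) (triple xs) = (\<lambda>x. ?B' x \<or> x \<in> set xs, rev xs)"
    using mtf2_triples_rev_suffix[of "[]" xs ?B'] assms by simp
  have "(\<lambda>x. ?B' x \<or> x \<in> set xs) = B"
    using assms(2) by auto
  with scan triples show ?thesis
    by (simp add: sweep_def mtf2_cost_append mtf2_state_append algebra_simps power2_eq_square)
qed

lemma mtf2_phase:
  assumes "distinct xs" "\<forall>x\<in>set xs. B x"
  shows "mtf2_cost B xs (phase xs) = 5 * length xs ^ 2 + 3 * length xs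
         \<and> mtf2_state B xs (phase xs) = (B, xs)"
  using mtf2_sweep[OF assms] mtf2_sweep[of "rev xs" B] assms
  by (simp add: phase_def mtf2_cost_append mtf2_state_append)

lemma mtf2_adversary:
  assumes "distinct xs"
  shows "K * (5 * length xs ^ 2 + 3 * length xs) \<le> mtf2_cost B xs (adversary B xs K)"
proof -
  let ?p = "filter (\<lambda>x. \<not> B x) xs"
  define B' where "B' = (\<lambda>x. B x \<or> x \<in> set ?p)"
  have prefix: "mtf2_state B xs ?p = (B', xs)"
    unfolding B'_def using assms by (intro mtf2_request_clear_bits) auto
  have "\<forall>x\<in>set xs. B' x"
    by (simp add: B'_def)
  then have "mtf2_cost B' xs (concat (replicate K (phase xs))) = K * (5 * length xs ^ 2 + 3 * length xs)"
    using mtf2_phase[OF assms] mtf2_cost_replicate by metis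
  then show ?thesis
    unfolding adversary_def mtf2_cost_append prefix by simp
qed

fun off_state :: "'a list \<Rightarrow> 'a list \<Rightarrow> (nat list \<times> nat) list \<Rightarrow> 'a list" where
  "off_state s [] _ = s"
| "off_state s (x # \<sigma>) [] = s"
| "off_state s (x # \<sigma>) ((sw, j) # as) =
     (let s' = fold swap_adj sw s; i = pos x s' in off_state (move_to (min j i) x s') \<sigma> as)"

lemma off_cost_append:
  "length a = length \<sigma> \<Longrightarrow>
   off_cost s (\<sigma> @ \<tau>) (a @ b) = off_cost s \<sigma> a + off_cost (off_state s \<sigma> a) \<tau> b"
proof (induction \<sigma> arbitrary: s a)
  case (Cons x \<sigma>)
  then show ?case by (cases a) (auto simp: Let_def)
qed simp

lemma off_state_append:
  "length a = length \<sigma> \<Longrightarrow> off_state s (\<sigma> @ \<tau>) (a @ b) = off_state (off_state s \<sigma> a) \<tau> b"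
proof (induction \<sigma> arbitrary: s a)
  case (Cons x \<sigma>)
  then show ?case by (cases a) (auto simp: Let_def)
qed simp

lemma off_cost_replicate:
  assumes "length a = length \<sigma>" "off_state s \<sigma> a = s"
  shows "off_cost s (concat (replicate K \<sigma>)) (concat (replicate K a)) = K * off_cost s \<sigma> a"
  by (induction K) (simp_all add: off_cost_append assms)

lemma OPT_le_off_cost: "length as = length \<sigma> \<Longrightarrow> OPT s \<sigma> \<le> off_cost s \<sigma> as"
  unfolding OPT_def by (rule Least_le) blast

lemma move_to_pos_self: "x \<in> set xs \<Longrightarrow> move_to (pos x xs) x xs = xs"
proof -
  assume "x \<in> set xs"
  then obtain as bs where "xs = as @ x # bs" "x \<notin> set as"
    by (meson split_list_first)
  then show ?thesis
    by (simp add: move_to_def pos_append_notin remove1_append)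
qed

lemma off_stay:
  assumes "set \<sigma> \<subseteq> set s" "length s \<le> N"
  shows "off_cost s \<sigma> (replicate (length \<sigma>) ([], N)) = (\<Sum>x\<leftarrow>\<sigma>. Suc (pos x s))
         \<and> off_state s \<sigma> (replicate (length \<sigma>) ([], N)) = s"
  using assms(1)
proof (induction \<sigma>)
  case (Cons x \<sigma>)
  then have "x \<in> set s" by simp
  then have "move_to (min N (pos x s)) x s = s"
    using pos_less_length[of x s] assms(2) by (simp add: min_def move_to_pos_self)
  with Cons show ?case by (simp add: Let_def)
qed simp

lemma sum_pos_scan:
  "distinct (ps @ ys) \<Longrightarrow>
   2 * (\<Sum>y\<leftarrow>ys. Suc (pos y (ps @ ys))) = length ys * (2 * length ps + length ys + 1)"
proof (induction ys arbitrary: ps)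
  case (Cons y ys)
  from Cons.prems have "2 * (\<Sum>z\<leftarrow>ys. Suc (pos z (ps @ y # ys)))
                          = length ys * (2 * length (ps @ [y]) + length ys + 1)"
    using Cons.IH[of "ps @ [y]"] by simp
  with Cons.prems show ?case
    by (simp add: pos_append_notin algebra_simps)
qed simp

lemma sum_pos_le: "set \<sigma> \<subseteq> set s \<Longrightarrow> (\<Sum>x\<leftarrow>\<sigma>. Suc (pos x s)) \<le> length \<sigma> * length s"
  using sum_list_mono[of \<sigma> "\<lambda>x. Suc (pos x s)" "\<lambda>_. length s"] pos_less_length[of _ s]
  by (auto simp: sum_list_triv Suc_le_eq)

lemma off_mtf_triples:
  "distinct (ps @ ys) \<Longrightarrow>
   2 * off_cost (ps @ ys) (triple ys) (replicate (3 * length ys) ([], 0))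
     = length ys * (2 * length ps + length ys + 5)
   \<and> off_state (ps @ ys) (triple ys) (replicate (3 * length ys) ([], 0)) = rev ys @ ps"
proof (induction ys arbitrary: ps)
  case (Cons y ys)
  have IH: "2 * off_cost ((y # ps) @ ys) (triple ys) (replicate (3 * length ys) ([], 0))
              = length ys * (2 * length (y # ps) + length ys + 5)
            \<and> off_state ((y # ps) @ ys) (triple ys) (replicate (3 * length ys) ([], 0))
              = rev ys @ y # ps"
    using Cons.prems by (intro Cons.IH) auto
  have acts: "replicate (3 * length (y # ys)) ([], 0)
                = ([], 0) # ([], 0) # ([], 0) # replicate (3 * length ys) ([], 0)"
    by (simp add: numeral_3_eq_3)
  from Cons.prems have "pos y (ps @ y # ys) = length ps" "move_to 0 y (ps @ y # ys) = y # ps @ ys"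
    by (simp_all add: pos_append_notin remove1_append move_to_def)
  moreover have "move_to 0 y (y # ps @ ys) = y # ps @ ys"
    by (simp add: move_to_def)
  ultimately show ?case
    using IH unfolding acts by (simp add: Let_def algebra_simps)
qed simp

definition sweep_acts :: "nat \<Rightarrow> nat \<Rightarrow> (nat list \<times> nat) list" where
  "sweep_acts N n = replicate n ([], N) @ replicate (3 * n) ([], 0)"

definition phase_acts :: "nat \<Rightarrow> nat \<Rightarrow> (nat list \<times> nat) list" where
  "phase_acts N n = sweep_acts N n @ sweep_acts N n"

lemma length_sweep [simp]: "length (sweep xs) = 4 * length xs"
  by (simp add: sweep_def)

lemma length_sweep_acts [simp]: "length (sweep_acts N n) = 4 * n"
  by (simp add: sweep_acts_def)

lemma off_sweep:
  assumes "distinct xs" "length xs \<le> N"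
  shows "off_cost xs (sweep xs) (sweep_acts N (length xs)) = length xs ^ 2 + 3 * length xs
         \<and> off_state xs (sweep xs) (sweep_acts N (length xs)) = rev xs"
proof -
  let ?n = "length xs"
  have scan: "2 * off_cost xs xs (replicate ?n ([], N)) = ?n * (?n + 1)
              \<and> off_state xs xs (replicate ?n ([], N)) = xs"
    using off_stay[of xs xs N] sum_pos_scan[of "[]" xs] assms by simp
  have triples: "2 * off_cost xs (triple xs) (replicate (3 * ?n) ([], 0)) = ?n * (?n + 5)
                 \<and> off_state xs (triple xs) (replicate (3 * ?n) ([], 0)) = rev xs"
    using off_mtf_triples[of "[]" xs] assms by simp
  have "2 * off_cost xs (sweep xs) (sweep_acts N ?n) = 2 * (?n ^ 2 + 3 * ?n)"
    using scan triples
    by (simp add: sweep_def sweep_acts_def off_cost_append algebra_simps power2_eq_square)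
  with scan triples show ?thesis
    by (simp add: sweep_def sweep_acts_def off_state_append)
qed

lemma off_phase:
  assumes "distinct xs" "length xs \<le> N"
  shows "off_cost xs (phase xs) (phase_acts N (length xs)) = 2 * (length xs ^ 2 + 3 * length xs)
         \<and> off_state xs (phase xs) (phase_acts N (length xs)) = xs"
  using off_sweep[OF assms] off_sweep[of "rev xs" N] assms
  by (simp add: phase_def phase_acts_def off_cost_append off_state_append)

lemma OPT_adversary:
  assumes "distinct xs"
  shows "OPT xs (adversary B xs K) \<le> length xs ^ 2 + K * (2 * length xs ^ 2 + 6 * length xs)"
proof -
  let ?n = "length xs" and ?p = "filter (\<lambda>x. \<not> B x) xs"
  let ?stay = "replicate (length ?p) ([], ?n)" and ?phases = "concat (replicate K (phase_acts ?n ?n))"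
  have "length ?p * ?n \<le> ?n ^ 2"
    by (simp add: power2_eq_square)
  then have prefix: "off_cost xs ?p ?stay \<le> ?n ^ 2 \<and> off_state xs ?p ?stay = xs"
    using off_stay[of ?p xs ?n] sum_pos_le[of ?p xs] by simp
  have "length (phase_acts ?n ?n) = length (phase xs)"
    by (simp add: phase_acts_def phase_def)
  then have "off_cost xs (concat (replicate K (phase xs))) ?phases = K * (2 * (?n ^ 2 + 3 * ?n))"
    using off_cost_replicate off_phase[OF assms le_refl] by metis
  with prefix have cost: "off_cost xs (adversary B xs K) (?stay @ ?phases) \<le> ?n ^ 2 + K * (2 * ?n ^ 2 + 6 * ?n)"
    by (simp add: adversary_def off_cost_append)
  have "length (?stay @ ?phases) = length (adversary B xs K)"
    by (simp add: adversary_def length_concat sum_list_triv phase_acts_def phase_def)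
  from OPT_le_off_cost[OF this] cost show ?thesis
    by (rule order_trans)
qed

lemma ratio_gap:
  fixes c :: real
  assumes "c < 5 / 2"
  obtains n :: nat where "c * (2 * real n ^ 2 + 6 * real n) < 5 * real n ^ 2 + 3 * real n"
proof -
  obtain n :: nat where n: "max 0 ((6 * c - 3) / (5 - 2 * c)) < n"
    using reals_Archimedean2 by blast
  then have "0 < real n" "(6 * c - 3) / (5 - 2 * c) < n"
    by simp_all
  then have "(6 * c - 3) * n < (5 - 2 * c) * n * n"
    using assms by (simp add: divide_less_eq mult.commute)
  then show ?thesis
    by (intro that[of n]) (simp add: algebra_simps power2_eq_square)
qed

lemma linear_growth_exceeds:
  fixes f g :: "nat \<Rightarrow> real" and c A E :: real
  assumes "0 \<le> c" "c * E < A"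
    and "\<And>K. K * A \<le> f K" "\<And>K. g K \<le> d + K * E"
  obtains K where "c * g K + b < f K"
proof -
  obtain K :: nat where K: "c * d + b < K * (A - c * E)"
    using ex_less_of_nat_mult[of "A - c * E"] assms(2) by auto
  have "c * g K \<le> c * d + K * (c * E)"
    using mult_left_mono[OF assms(4)[of K] assms(1)] by (simp add: algebra_simps)
  moreover have "K * (A - c * E) = K * A - K * (c * E)"
    by (simp add: right_diff_distrib)
  ultimately have "c * g K + b < f K"
    using K assms(3)[of K] by linarith
  then show ?thesis
    by (rule that)
qed

theorem lemma11:
  fixes B :: "nat \<Rightarrow> bool" and c b :: real
  assumes "c < 5 / 2"
  shows "\<exists>(s :: nat list) \<sigma>. distinct s \<and> set \<sigma> \<subseteq> set s \<and>
           real (mtf2_cost B s \<sigma>) > c * real (OPT s \<sigma>) + b"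
proof -
  define c' where "c' = max c 0"
  have "c' < 5 / 2"
    using assms by (simp add: c'_def)
  then obtain n :: nat where gap: "c' * (2 * real n ^ 2 + 6 * real n) < 5 * real n ^ 2 + 3 * real n"
    by (rule ratio_gap)
  define xs where "xs = [0..<n]"
  have xs: "distinct xs" "length xs = n"
    by (simp_all add: xs_def)
  have "0 \<le> c'"
    by (simp add: c'_def)
  moreover note gap
  moreover have "real K * (5 * real n ^ 2 + 3 * real n) \<le> mtf2_cost B xs (adversary B xs K)" for K
    using of_nat_mono[OF mtf2_adversary[OF xs(1), of K B], where 'a=real] xs(2) by simp
  moreover have "OPT xs (adversary B xs K) \<le> real n ^ 2 + real K * (2 * real n ^ 2 + 6 * real n)" for K
    using of_nat_mono[OF OPT_adversary[OF xs(1), of B K], where 'a=real] xs(2) by simp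
  ultimately obtain K where "c' * OPT xs (adversary B xs K) + b < mtf2_cost B xs (adversary B xs K)"
    by (rule linear_growth_exceeds)
  moreover have "c * OPT xs (adversary B xs K) \<le> c' * OPT xs (adversary B xs K)"
    by (simp add: c'_def mult_right_mono)
  ultimately have "c * OPT xs (adversary B xs K) + b < mtf2_cost B xs (adversary B xs K)"
    by linarith
  with xs(1) set_adversary[of B xs K] show ?thesis
    by blast
qed

end
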